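(* For every integer $n\ge3$, if $T$ is a uniformly random standard Young tableau of shape $(n,n,n)$, then $$SP\big((n,n,n),[1,3],[2,2]\big)=\Pr(T_{1,3}>T_{2,2})-\Pr(T_{2,2}>T_{1,3})=-\frac{(17n-4)(n-3)}{3(3n-1)(3n-4)}.$$
   Context: A partition (shape) $\lambda=(\lambda_1,\dots,\lambda_k)$ with $\lambda_1\ge\dots\ge\lambda_k>0$ is identified with its Young diagram, the set of cells $[i,j]$ with $1\le i\le k$ and $1\le j\le\lambda_i$ (row $i$, column $j$). A standard Young tableau of shape $\lambda$ with $N=\sum\lambda_i$ cells is a bijective filling $T$ of the cells by $\{1,\dots,N\}$ with $T_{i,j}<T_{i,j+1}$ and $T_{i,j}<T_{i+1,j}$ whenever these cells exist. For cells $c_1,c_2$ of $\lambda$, the sorting probability is $SP(\lambda,c_1,c_2)=\Pr(T_{c_1}>T_{c_2})-\Pr(T_{c_2}>T_{c_1})=2\Pr(T_{c_1}>T_{c_2})-1$, where $T$ is uniformly random among standard Young tableaux of shape $\lambda$. *)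

theory Defs
  imports Main "HOL.Real"
begin

text \<open>A shape is a list of row lengths (lambda_1, ..., lambda_k); cells are pairs (i,j),
  row i, column j, both 1-indexed.\<close>

definition young_diagram :: "nat list \<Rightarrow> (nat \<times> nat) set" where
  "young_diagram lam = {(i, j). 1 \<le> i \<and> i \<le> length lam \<and> 1 \<le> j \<and> j \<le> lam ! (i - 1)}"

text \<open>Standard Young tableaux of shape lam, as fillings of the cells by 1..N
  (extended by 0 outside the diagram, so that the set is finite).\<close>

definition SYT :: "nat list \<Rightarrow> ((nat \<times> nat) \<Rightarrow> nat) set" where
  "SYT lam = {T. bij_betw T (young_diagram lam) {1..sum_list lam}
      \<and> (\<forall>i j. (i, j) \<in> young_diagram lam \<and> (i, j + 1) \<in> young_diagram lam \<longrightarrow> T (i, j) < T (i, j + 1))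
      \<and> (\<forall>i j. (i, j) \<in> young_diagram lam \<and> (i + 1, j) \<in> young_diagram lam \<longrightarrow> T (i, j) < T (i + 1, j))
      \<and> (\<forall>c. c \<notin> young_diagram lam \<longrightarrow> T c = 0)}"

definition sorting_prob :: "nat list \<Rightarrow> nat \<times> nat \<Rightarrow> nat \<times> nat \<Rightarrow> real" where
  "sorting_prob lam c1 c2 =
     (real (card {T \<in> SYT lam. T c1 > T c2}) - real (card {T \<in> SYT lam. T c2 > T c1}))
       / real (card (SYT lam))"

end

theory Submission
  imports Defs
begin

(* Rotating a tableau of shape (n, n, n) by 180 degrees and replacing every entry v by 3n + 1 - v
   is an involution on SYT (n, n, n) which turns the event T(2,2) < T(1,3) into
   T(3,n-2) < T(2,n-1).  The latter event is counted by repeatedly deleting the largest entry,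
   which always occupies a corner: the comparison of the two cells is unaffected until one of them
   is the corner being deleted, and the tableaux that remain at that moment number
   2 f(n,n-2,n-2) + 3 f(n-1,n-2,n-2), where f counts the tableaux of a three-row shape.  The same
   corner recursion proves the hook length formula for f, which turns this count into
   5n(n+1) / (3(3n-1)(3n-4)) times f(n,n,n); the sorting probability is twice that ratio minus 1. *)

section \<open>Standard Young tableaux\<close>

lemma finite_young_diagram: "finite (young_diagram lam)"
proof (rule finite_subset)
  show "young_diagram lam \<subseteq> {1..length lam} \<times> {1..sum_list lam}"
  proof (clarsimp simp: young_diagram_def)
    fix i j assume "Suc 0 \<le> i" "i \<le> length lam" "j \<le> lam ! (i - Suc 0)"
    moreover from \<open>Suc 0 \<le> i\<close> \<open>i \<le> length lam\<close> have "lam ! (i - 1) \<le> sum_list lam"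
      by (intro elem_le_sum_list) linarith
    ultimately show "j \<le> sum_list lam" by simp
  qed
qed simp

lemma finite_SYT: "finite (SYT lam)"
proof (rule finite_subset)
  show "SYT lam \<subseteq> {T. \<forall>x. (x \<in> young_diagram lam \<longrightarrow> T x \<in> {1..sum_list lam})
                        \<and> (x \<notin> young_diagram lam \<longrightarrow> T x = 0)}"
    unfolding SYT_def bij_betw_def by auto
  show "finite \<dots>"
    by (intro finite_set_of_finite_funs finite_young_diagram) simp
qed

lemma SYT_bij_betw: "T \<in> SYT lam \<Longrightarrow> bij_betw T (young_diagram lam) {1..sum_list lam}"
  unfolding SYT_def by blast

lemma SYT_inj_on: "T \<in> SYT lam \<Longrightarrow> inj_on T (young_diagram lam)"
  using SYT_bij_betw bij_betw_def by blast

lemma SYT_in_range: "T \<in> SYT lam \<Longrightarrow> x \<in> young_diagram lam \<Longrightarrow> T x \<in> {1..sum_list lam}"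
  using SYT_bij_betw bij_betwE by blast

lemma SYT_outside: "T \<in> SYT lam \<Longrightarrow> x \<notin> young_diagram lam \<Longrightarrow> T x = 0"
  unfolding SYT_def by blast

lemma SYT_le_size: "T \<in> SYT lam \<Longrightarrow> T x \<le> sum_list lam"
  by (cases "x \<in> young_diagram lam") (auto dest: SYT_in_range SYT_outside)

lemma SYT_row_less:
  "T \<in> SYT lam \<Longrightarrow> (i, j) \<in> young_diagram lam \<Longrightarrow> (i, j + 1) \<in> young_diagram lam \<Longrightarrow> T (i, j) < T (i, j + 1)"
  unfolding SYT_def by blast

lemma SYT_col_less:
  "T \<in> SYT lam \<Longrightarrow> (i, j) \<in> young_diagram lam \<Longrightarrow> (i + 1, j) \<in> young_diagram lam \<Longrightarrow> T (i, j) < T (i + 1, j)"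
  unfolding SYT_def by blast

lemma SYT_eq_imp_eq: "T \<in> SYT lam \<Longrightarrow> T x = T y \<Longrightarrow> 0 < T x \<Longrightarrow> x = y"
  by (metis SYT_inj_on SYT_outside inj_onD neq0_conv)

lemma SYT_filter_less_above_size:
  assumes "sum_list lam < N"
  shows "{T \<in> SYT lam. T x < N} = SYT lam"
proof -
  have "T x < N" if "T \<in> SYT lam" for T
    using SYT_le_size[OF that, of x] assms by linarith
  then show ?thesis by blast
qed

lemma SYT_filter_greater_above_size:
  assumes "sum_list lam < N"
  shows "{T \<in> SYT lam. N < T x} = {}"
proof -
  have "\<not> N < T x" if "T \<in> SYT lam" for T
    using SYT_le_size[OF that, of x] assms by linarith
  then show ?thesis by blast
qed

lemma card_filter_bij_betw:
  assumes "bij_betw f A B"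
  shows "card {x \<in> A. P (f x)} = card {y \<in> B. P y}"
  by (rule bij_betw_same_card[of f]) (use assms in \<open>auto simp: bij_betw_def inj_on_def\<close>)

lemma sorting_prob_eq_card_less:
  assumes "c1 \<in> young_diagram lam" "c2 \<in> young_diagram lam" "c1 \<noteq> c2"
  shows "sorting_prob lam c1 c2 =
    (2 * real (card {T \<in> SYT lam. T c2 < T c1}) - real (card (SYT lam))) / real (card (SYT lam))"
proof -
  let ?A = "{T \<in> SYT lam. T c2 < T c1}"
  have neq: "T c1 \<noteq> T c2" if "T \<in> SYT lam" for T
    using SYT_inj_on[OF that] assms by (meson inj_onD)
  have "T c1 < T c2 \<longleftrightarrow> \<not> T c2 < T c1" if "T \<in> SYT lam" for T
    using neq[OF that] by linarith
  then have "{T \<in> SYT lam. T c1 < T c2} = SYT lam - ?A" by blast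
  moreover have "real (card (SYT lam - ?A)) = real (card (SYT lam)) - real (card ?A)"
  proof -
    have "?A \<subseteq> SYT lam" by blast
    then have "card (SYT lam - ?A) = card (SYT lam) - card ?A" "card ?A \<le> card (SYT lam)"
      using finite_SYT by (auto intro: card_Diff_subset card_mono finite_subset)
    then show ?thesis by (simp add: of_nat_diff)
  qed
  ultimately show ?thesis
    unfolding sorting_prob_def by simp
qed

section \<open>Removing the largest entry\<close>

definition is_corner :: "nat list \<Rightarrow> nat \<times> nat \<Rightarrow> bool" where
  "is_corner lam c \<longleftrightarrow> c \<in> young_diagram lam
     \<and> (fst c, snd c + 1) \<notin> young_diagram lam \<and> (fst c + 1, snd c) \<notin> young_diagram lam"

lemma SYT_max_is_corner:
  assumes T: "T \<in> SYT lam" and pos: "0 < sum_list lam" and max: "T c = sum_list lam"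
  shows "is_corner lam c"
proof -
  obtain i j where c: "c = (i, j)" by fastforce
  have in_lam: "c \<in> young_diagram lam"
    using SYT_outside[OF T] pos max by fastforce
  have "T (i, j + 1) \<le> T c" "T (i + 1, j) \<le> T c"
    using SYT_le_size[OF T] max by auto
  then show ?thesis
    using in_lam SYT_row_less[OF T] SYT_col_less[OF T] unfolding is_corner_def c by force
qed

lemma SYT_max_exists:
  assumes "T \<in> SYT lam" and "0 < sum_list lam"
  obtains c where "c \<in> young_diagram lam" "T c = sum_list lam"
  using bij_betw_imp_surj_on[OF SYT_bij_betw[OF assms(1)]] assms(2)
  by (metis atLeastAtMost_iff imageE less_one linorder_not_le order_refl)

lemma bij_betw_insert_max_iff:
  assumes "Y = insert c Y'" "c \<notin> Y'" "N = Suc M" "T c = N"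
  shows "bij_betw T Y {1..N} \<longleftrightarrow> bij_betw (T(c := 0)) Y' {1..M}"
proof -
  have "bij_betw T Y {1..N} \<longleftrightarrow> bij_betw T (Y' \<union> {c}) ({1..M} \<union> {T c})"
    using assms by (simp add: atLeastAtMostSuc_conv)
  also have "\<dots> \<longleftrightarrow> bij_betw T Y' {1..M}"
    by (rule notIn_Un_bij_betw3[symmetric]) (use assms in auto)
  also have "\<dots> \<longleftrightarrow> bij_betw (T(c := 0)) Y' {1..M}"
    using assms(2) by (intro bij_betw_cong) auto
  finally show ?thesis .
qed

lemma SYT_remove_max:
  assumes Y: "young_diagram lam = insert c (young_diagram lam')" "c \<notin> young_diagram lam'"
    and N: "sum_list lam = Suc (sum_list lam')"
    and T: "T \<in> SYT lam" "T c = sum_list lam"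
  shows "T(c := 0) \<in> SYT lam'"
proof -
  let ?Y' = "young_diagram lam'" and ?T' = "T(c := 0)"
  have agree: "?T' x = T x" "x \<in> young_diagram lam" if "x \<in> ?Y'" for x
    using that Y by auto
  have "bij_betw ?T' ?Y' {1..sum_list lam'}"
    using SYT_bij_betw[OF T(1)] bij_betw_insert_max_iff[where T = T, OF Y N T(2)] by blast
  moreover have "?T' (i, j) < ?T' (i, j + 1)" if "(i, j) \<in> ?Y'" "(i, j + 1) \<in> ?Y'" for i j
    using that agree SYT_row_less[OF T(1)] by simp
  moreover have "?T' (i, j) < ?T' (i + 1, j)" if "(i, j) \<in> ?Y'" "(i + 1, j) \<in> ?Y'" for i j
    using that agree SYT_col_less[OF T(1)] by simp
  moreover have "?T' x = 0" if "x \<notin> ?Y'" for x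
    using that SYT_outside[OF T(1), of x] Y by auto
  ultimately show ?thesis unfolding SYT_def by blast
qed

lemma SYT_add_corner:
  assumes Y: "young_diagram lam = insert c (young_diagram lam')" "c \<notin> young_diagram lam'"
    and corner: "is_corner lam c"
    and N: "sum_list lam = Suc (sum_list lam')"
    and T': "T(c := 0) \<in> SYT lam'" and max: "T c = sum_list lam"
  shows "T \<in> SYT lam"
proof -
  let ?Y = "young_diagram lam" and ?Y' = "young_diagram lam'" and ?T' = "T(c := 0)"
  have below_max: "T x < T c" if "x \<in> ?Y'" for x
  proof -
    have "?T' x \<le> sum_list lam'" using SYT_in_range[OF T' that] by simp
    then show ?thesis using that Y(2) N max by (simp split: if_splits)
  qed
  have T_less: "T x < T y" if "x \<in> ?Y'" "y \<in> ?Y'" "?T' x < ?T' y" for x y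
    using that Y(2) by (metis fun_upd_other)
  have smaller: "(i, j) \<in> ?Y'" if "(i, j) \<in> ?Y" "(i, j + 1) \<in> ?Y \<or> (i + 1, j) \<in> ?Y" for i j
  proof -
    have "(i, j) \<noteq> c" using that(2) corner unfolding is_corner_def by force
    then show ?thesis using that(1) Y(1) by blast
  qed
  have "bij_betw T ?Y {1..sum_list lam}"
    using SYT_bij_betw[OF T'] bij_betw_insert_max_iff[where T = T, OF Y N max] by blast
  moreover have "T (i, j) < T (i, j + 1)" if "(i, j) \<in> ?Y" "(i, j + 1) \<in> ?Y" for i j
  proof -
    have "(i, j) \<in> ?Y'" using smaller that by blast
    moreover have "(i, j + 1) = c \<or> (i, j + 1) \<in> ?Y'" using that(2) Y(1) by blast
    ultimately show ?thesis using below_max T_less SYT_row_less[OF T'] by blast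
  qed
  moreover have "T (i, j) < T (i + 1, j)" if "(i, j) \<in> ?Y" "(i + 1, j) \<in> ?Y" for i j
  proof -
    have "(i, j) \<in> ?Y'" using smaller that by blast
    moreover have "(i + 1, j) = c \<or> (i + 1, j) \<in> ?Y'" using that(2) Y(1) by blast
    ultimately show ?thesis using below_max T_less SYT_col_less[OF T'] by blast
  qed
  moreover have "T x = 0" if "x \<notin> ?Y" for x
    using SYT_outside[OF T', of x] that Y(1) by auto
  ultimately show ?thesis unfolding SYT_def by blast
qed

lemma bij_betw_SYT_add_corner:
  assumes Y: "young_diagram lam = insert c (young_diagram lam')" "c \<notin> young_diagram lam'"
    and corner: "is_corner lam c"
    and N: "sum_list lam = Suc (sum_list lam')"
  shows "bij_betw (\<lambda>T. T(c := sum_list lam)) (SYT lam') {T \<in> SYT lam. T c = sum_list lam}"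
proof (rule bij_betw_byWitness[where f' = "\<lambda>T. T(c := 0)"])
  have vacant: "T c = 0" if "T \<in> SYT lam'" for T
    using SYT_outside[OF that Y(2)] .
  show "\<forall>T \<in> SYT lam'. (T(c := sum_list lam))(c := 0) = T"
    using vacant by (simp add: fun_upd_idem)
  show "\<forall>T \<in> {T \<in> SYT lam. T c = sum_list lam}. (T(c := 0))(c := sum_list lam) = T"
    by auto
  show "(\<lambda>T. T(c := sum_list lam)) ` SYT lam' \<subseteq> {T \<in> SYT lam. T c = sum_list lam}"
    using SYT_add_corner[OF Y corner N] vacant by (auto simp: fun_upd_idem)
  show "(\<lambda>T. T(c := 0)) ` {T \<in> SYT lam. T c = sum_list lam} \<subseteq> SYT lam'"
    using SYT_remove_max[OF Y N] by auto
qed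

lemma card_SYT_max_at_corner:
  assumes "young_diagram lam = insert c (young_diagram lam')"
    and "c \<notin> young_diagram lam'" "is_corner lam c"
    and "sum_list lam = Suc (sum_list lam')"
  shows "card {T \<in> SYT lam. T c = sum_list lam \<and> P T} = card {T \<in> SYT lam'. P (T(c := sum_list lam))}"
proof -
  have "{T \<in> SYT lam. T c = sum_list lam \<and> P T} = {T \<in> {T \<in> SYT lam. T c = sum_list lam}. P T}"
    by auto
  then show ?thesis
    using card_filter_bij_betw[OF bij_betw_SYT_add_corner[OF assms], of P] by simp
qed

section \<open>Three-row shapes and the hook length formula\<close>

lemma mem_young_diagram_three_rows:
  "(i, j) \<in> young_diagram [a, b, c] \<longleftrightarrow>
     1 \<le> j \<and> (i = 1 \<and> j \<le> a \<or> i = 2 \<and> j \<le> b \<or> i = 3 \<and> j \<le> c)"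
  by (auto simp: young_diagram_def nth_Cons split: nat.splits)

lemma card_SYT_three_rows_filter_rec:
  assumes "c \<le> b" "b \<le> a" "0 < a + b + c"
  shows "card {T \<in> SYT [a, b, c]. P T} =
     (if b < a then card {T \<in> SYT [a - 1, b, c]. P (T((1, a) := a + b + c))} else 0) +
     (if c < b then card {T \<in> SYT [a, b - 1, c]. P (T((2, b) := a + b + c))} else 0) +
     (if 0 < c then card {T \<in> SYT [a, b, c - 1]. P (T((3, c) := a + b + c))} else 0)"
proof -
  let ?lam = "[a, b, c]"
  define A where "A x = {T \<in> SYT ?lam. T x = sum_list ?lam \<and> P T}" for x
  have pos: "0 < sum_list ?lam" using assms by simp
  have "x \<in> {(1, a), (2, b), (3, c)}" if "is_corner ?lam x" for x
    using that by (cases x) (auto simp: is_corner_def mem_young_diagram_three_rows)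
  then have "{T \<in> SYT ?lam. P T} = A (1, a) \<union> A (2, b) \<union> A (3, c)"
    using SYT_max_exists[OF _ pos] SYT_max_is_corner[OF _ pos] unfolding A_def by blast
  moreover have "x = y" if "T \<in> A x" "T \<in> A y" for T x y
    using that pos SYT_eq_imp_eq[of T ?lam x y] unfolding A_def by simp
  then have "A x \<inter> A y = {}" if "x \<noteq> y" for x y
    using that by blast
  moreover have "finite (A x)" for x
    unfolding A_def using finite_SYT by simp
  ultimately have split: "card {T \<in> SYT ?lam. P T} = card (A (1, a)) + card (A (2, b)) + card (A (3, c))"
    by (simp add: card_Un_disjoint Int_Un_distrib2)
  have card_A: "card (A x) = (if is_corner ?lam x then card {T \<in> SYT lam'. P (T(x := sum_list ?lam))} else 0)"
    if "is_corner ?lam x \<Longrightarrow> young_diagram ?lam = insert x (young_diagram lam')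
      \<and> x \<notin> young_diagram lam' \<and> sum_list ?lam = Suc (sum_list lam')" for x lam'
  proof (cases "is_corner ?lam x")
    case True
    then show ?thesis using that card_SYT_max_at_corner[of ?lam x lam' P] unfolding A_def by auto
  next
    case False
    then have "A x = {}" using SYT_max_is_corner[OF _ pos] unfolding A_def by blast
    then show ?thesis using False by simp
  qed
  have "is_corner ?lam (1, a) \<longleftrightarrow> b < a" "is_corner ?lam (2, b) \<longleftrightarrow> c < b" "is_corner ?lam (3, c) \<longleftrightarrow> 0 < c"
    using assms by (auto simp: is_corner_def mem_young_diagram_three_rows)
  moreover have "young_diagram ?lam = insert (1, a) (young_diagram [a - 1, b, c])"
    "(1, a) \<notin> young_diagram [a - 1, b, c]" if "b < a"
    using that by (auto simp: set_eq_iff mem_young_diagram_three_rows)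
  moreover have "young_diagram ?lam = insert (2, b) (young_diagram [a, b - 1, c])"
    "(2, b) \<notin> young_diagram [a, b - 1, c]" if "c < b"
    using that by (auto simp: set_eq_iff mem_young_diagram_three_rows)
  moreover have "young_diagram ?lam = insert (3, c) (young_diagram [a, b, c - 1])"
    "(3, c) \<notin> young_diagram [a, b, c - 1]" if "0 < c"
    using that by (auto simp: set_eq_iff mem_young_diagram_three_rows)
  ultimately show ?thesis
    using split card_A[of "(1, a)" "[a - 1, b, c]"] card_A[of "(2, b)" "[a, b - 1, c]"]
      card_A[of "(3, c)" "[a, b, c - 1]"]
    by (simp add: add.assoc)
qed

lemma card_SYT_three_rows_rec:
  assumes "c \<le> b" "b \<le> a" "0 < a + b + c"
  shows "card (SYT [a, b, c]) = (if b < a then card (SYT [a - 1, b, c]) else 0)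
     + (if c < b then card (SYT [a, b - 1, c]) else 0) + (if 0 < c then card (SYT [a, b, c - 1]) else 0)"
  using card_SYT_three_rows_filter_rec[OF assms, of "\<lambda>_. True"] by simp

lemma card_SYT_three_rows_gap_rec:
  assumes "0 < 3 * c + 2 * q + p"
  shows "card (SYT [c + q + p, c + q, c]) =
    (if 0 < p then card (SYT [c + q + (p - 1), c + q, c]) else 0)
    + (if 0 < q then card (SYT [c + (q - 1) + (p + 1), c + (q - 1), c]) else 0)
    + (if 0 < c then card (SYT [c - 1 + (q + 1) + p, c - 1 + (q + 1), c - 1]) else 0)"
  using card_SYT_three_rows_rec[of c "c + q" "c + q + p"] assms
  by (cases p; cases q; cases c) (simp_all add: algebra_simps)

lemma SYT_three_empty_rows: "SYT [0, 0, 0] = {\<lambda>_. 0}"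
proof -
  have "young_diagram [0, 0, 0] = {}" by (auto simp: mem_young_diagram_three_rows)
  then show ?thesis unfolding SYT_def by (auto simp: bij_betw_def)
qed

lemma mult_eq_rescale:
  fixes x :: "'a :: comm_semiring_1"
  assumes "x * K' = F * A" "K = s * K'"
  shows "x * K = F * (s * A)"
  using assms by (metis mult.left_commute)

(* The hook length formula for three rows, in the gap coordinates p = a - b and q = b - c, which
   avoid truncated subtraction; the three summands of the induction step are the removals of the
   corners of rows 1, 2 and 3. *)
lemma card_SYT_three_rows_hook:
  "card (SYT [c + q + p, c + q, c]) * (fact (c + q + p + 2) * fact (c + q + 1) * fact c)
     = fact (3 * c + 2 * q + p) * ((p + 1) * (p + q + 2) * (q + 1))"
proof (induction "3 * c + 2 * q + p" arbitrary: c q p)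
  case 0
  then show ?case by (simp add: SYT_three_empty_rows)
next
  case (Suc N)
  define f where "f c q p = card (SYT [c + q + p, c + q, c])" for c q p
  define K where "K = fact (c + q + p + 2) * fact (c + q + 1) * (fact c :: nat)"
  have IH: "f c q p * (fact (c + q + p + 2) * fact (c + q + 1) * fact c) = fact N * ((p + 1) * (p + q + 2) * (q + 1))"
    if "N = 3 * c + 2 * q + p" for c q p
    using Suc.hyps(1)[OF that] by (simp only: f_def that)
  have "f c q p = (if 0 < p then f c q (p - 1) else 0) + (if 0 < q then f c (q - 1) (p + 1) else 0)
      + (if 0 < c then f (c - 1) (q + 1) p else 0)"
    unfolding f_def by (rule card_SYT_three_rows_gap_rec) (use Suc.hyps(2) in linarith)
  moreover have "(if 0 < p then f c q (p - 1) else 0) * K = fact N * (p * (p + q + 1) * (q + 1) * (c + q + p + 2))"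
  proof (cases p)
    case (Suc p')
    have "f c q p' * K = fact N * ((c + q + p + 2) * ((p' + 1) * (p' + q + 2) * (q + 1)))"
    proof (rule mult_eq_rescale[OF IH])
      have "c + q + p + 2 = Suc (c + q + p' + 2)" using Suc by simp
      then show "K = (c + q + p + 2) * (fact (c + q + p' + 2) * fact (c + q + 1) * fact c)"
        unfolding K_def by (simp only: fact_Suc of_nat_id mult.assoc)
    qed (use Suc.hyps(2) Suc in simp)
    then show ?thesis using Suc by (simp add: algebra_simps)
  qed simp
  moreover have "(if 0 < q then f c (q - 1) (p + 1) else 0) * K = fact N * ((p + 2) * (p + q + 2) * q * (c + q + 1))"
  proof (cases q)
    case (Suc q')
    have "f c q' (p + 1) * K = fact N * ((c + q + 1) * ((p + 1 + 1) * (p + 1 + q' + 2) * (q' + 1)))"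
    proof (rule mult_eq_rescale[OF IH])
      have "c + q' + (p + 1) + 2 = c + q + p + 2" "c + q + 1 = Suc (c + q' + 1)" using Suc by simp_all
      then show "K = (c + q + 1) * (fact (c + q' + (p + 1) + 2) * fact (c + q' + 1) * fact c)"
        unfolding K_def by (simp only: fact_Suc of_nat_id mult.left_commute)
    qed (use Suc.hyps(2) Suc in simp)
    then show ?thesis using Suc by (simp add: algebra_simps)
  qed simp
  moreover have "(if 0 < c then f (c - 1) (q + 1) p else 0) * K = fact N * ((p + 1) * (p + q + 3) * (q + 2) * c)"
  proof (cases c)
    case (Suc c')
    have "f c' (q + 1) p * K = fact N * (c * ((p + 1) * (p + (q + 1) + 2) * (q + 1 + 1)))"
    proof (rule mult_eq_rescale[OF IH])
      have "c' + (q + 1) + p + 2 = c + q + p + 2" "c' + (q + 1) + 1 = c + q + 1" using Suc by simp_all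
      then show "K = c * (fact (c' + (q + 1) + p + 2) * fact (c' + (q + 1) + 1) * fact c')"
        unfolding K_def Suc by (simp only: fact_Suc of_nat_id mult.left_commute)
    qed (use Suc.hyps(2) Suc in simp)
    then show ?thesis using Suc by (simp add: algebra_simps)
  qed simp
  ultimately have "f c q p * K = fact N * (p * (p + q + 1) * (q + 1) * (c + q + p + 2)
      + (p + 2) * (p + q + 2) * q * (c + q + 1) + (p + 1) * (p + q + 3) * (q + 2) * c)"
    by (simp only: distrib_left distrib_right)
  also have "\<dots> = fact N * ((3 * c + 2 * q + p) * ((p + 1) * (p + q + 2) * (q + 1)))"
    by (simp add: algebra_simps)
  also have "\<dots> = fact (Suc N) * ((p + 1) * (p + q + 2) * (q + 1))"
    using fact_Suc[of N, where 'a = nat] by (simp only: of_nat_id Suc.hyps(2) ac_simps)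
  finally show ?case unfolding f_def K_def Suc.hyps(2) .
qed

corollary card_SYT_two_equal_rows:
  "real (card (SYT [c + p, c, c])) = fact (3 * c + p) * ((p + 1) * (p + 2)) / (fact (c + p + 2) * fact (c + 1) * fact c)"
proof -
  have "card (SYT [c + p, c, c]) * (fact (c + p + 2) * fact (c + 1) * fact c) = fact (3 * c + p) * ((p + 1) * (p + 2))"
    using card_SYT_three_rows_hook[of c 0 p] by simp
  then have "real (card (SYT [c + p, c, c]) * (fact (c + p + 2) * fact (c + 1) * fact c))
      = real (fact (3 * c + p) * ((p + 1) * (p + 2)))"
    by (rule arg_cong)
  then have "real (card (SYT [c + p, c, c])) * (fact (c + p + 2) * fact (c + 1) * fact c)
      = fact (3 * c + p) * ((real p + 1) * (real p + 2))"
    by (simp only: of_nat_mult of_nat_fact of_nat_add of_nat_1 of_nat_numeral)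
  moreover have "(fact (c + p + 2) * fact (c + 1) * fact c :: real) \<noteq> 0" by simp
  ultimately show ?thesis by (blast intro: eq_divide_imp)
qed

section \<open>Rotating rectangular tableaux\<close>

lemma young_diagram_replicate: "young_diagram (replicate k n) = {1..k} \<times> {1..n}"
  by (auto simp: young_diagram_def)

definition rotate_tableau :: "nat \<Rightarrow> nat \<Rightarrow> (nat \<times> nat \<Rightarrow> nat) \<Rightarrow> nat \<times> nat \<Rightarrow> nat" where
  "rotate_tableau k n T = (\<lambda>(i, j). if (i, j) \<in> {1..k} \<times> {1..n} then k * n + 1 - T (k + 1 - i, n + 1 - j) else 0)"

lemma rotate_tableau_inside:
  "(i, j) \<in> {1..k} \<times> {1..n} \<Longrightarrow> rotate_tableau k n T (i, j) = k * n + 1 - T (k + 1 - i, n + 1 - j)"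
  by (simp add: rotate_tableau_def)

lemma rotate_tableau_outside: "x \<notin> {1..k} \<times> {1..n} \<Longrightarrow> rotate_tableau k n T x = 0"
  unfolding rotate_tableau_def by (simp only: case_prod_beta prod.collapse if_not_P if_False)

lemma rotate_tableau_SYT:
  assumes T: "T \<in> SYT (replicate k n)"
  shows "rotate_tableau k n T \<in> SYT (replicate k n)"
proof -
  let ?R = "rotate_tableau k n T" and ?Y = "{1..k} \<times> {1..n}"
  have Y: "young_diagram (replicate k n) = ?Y" by (rule young_diagram_replicate)
  have size: "sum_list (replicate k n) = k * n" by (simp add: sum_list_replicate)
  have bound: "T x \<le> k * n" for x
    using SYT_le_size[OF T] size by metis
  have "bij_betw ((\<lambda>v. k * n + 1 - v) \<circ> T \<circ> (\<lambda>(i, j). (k + 1 - i, n + 1 - j))) ?Y {1..k * n}"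
  proof (intro bij_betw_trans)
    show "bij_betw (\<lambda>(i, j). (k + 1 - i, n + 1 - j)) ?Y ?Y"
      by (rule bij_betw_byWitness[where f' = "\<lambda>(i, j). (k + 1 - i, n + 1 - j)"]) auto
    show "bij_betw T ?Y {1..k * n}" using SYT_bij_betw[OF T] Y size by simp
    show "bij_betw (\<lambda>v. k * n + 1 - v) {1..k * n} {1..k * n}"
      by (rule bij_betw_byWitness[where f' = "\<lambda>v. k * n + 1 - v"]) auto
  qed
  then have "bij_betw ?R ?Y {1..k * n}"
    by (rule bij_betw_cong[THEN iffD1, rotated]) (clarsimp simp: rotate_tableau_inside)
  moreover have "?R (i, j) < ?R (i, j + 1)" if "(i, j) \<in> ?Y" "(i, j + 1) \<in> ?Y" for i j
  proof -
    have j: "n + 1 - j = n - j + 1" "n + 1 - (j + 1) = n - j" using that by auto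
    have "T (k + 1 - i, n - j) < T (k + 1 - i, n - j + 1)"
      by (rule SYT_row_less[OF T]) (use that in \<open>auto simp: Y\<close>)
    then show ?thesis
      using rotate_tableau_inside[OF that(1), where T = T] rotate_tableau_inside[OF that(2), where T = T] bound[of "(k + 1 - i, n - j + 1)"]
      unfolding j by linarith
  qed
  moreover have "?R (i, j) < ?R (i + 1, j)" if "(i, j) \<in> ?Y" "(i + 1, j) \<in> ?Y" for i j
  proof -
    have i: "k + 1 - i = k - i + 1" "k + 1 - (i + 1) = k - i" using that by auto
    have "T (k - i, n + 1 - j) < T (k - i + 1, n + 1 - j)"
      by (rule SYT_col_less[OF T]) (use that in \<open>auto simp: Y\<close>)
    then show ?thesis
      using rotate_tableau_inside[OF that(1), where T = T] rotate_tableau_inside[OF that(2), where T = T] bound[of "(k - i + 1, n + 1 - j)"]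
      unfolding i by linarith
  qed
  moreover have "?R x = 0" if "x \<notin> ?Y" for x
    using that by (rule rotate_tableau_outside)
  ultimately show ?thesis unfolding SYT_def Y size by blast
qed

lemma rotate_tableau_rotate_tableau:
  assumes T: "T \<in> SYT (replicate k n)"
  shows "rotate_tableau k n (rotate_tableau k n T) = T"
proof
  fix x :: "nat \<times> nat"
  obtain i j where x: "x = (i, j)" by fastforce
  show "rotate_tableau k n (rotate_tableau k n T) x = T x"
  proof (cases "x \<in> {1..k} \<times> {1..n}")
    case True
    then have "T x \<le> k * n" using SYT_le_size[OF T] by (simp add: sum_list_replicate)
    then show ?thesis using True unfolding x by (auto simp: rotate_tableau_def)
  next
    case False
    then show ?thesis using SYT_outside[OF T, of x]
      by (simp add: rotate_tableau_outside young_diagram_replicate)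
  qed
qed

lemma card_SYT_rectangle_less_rotate:
  assumes "(i, j) \<in> {1..k} \<times> {1..n}" "(i', j') \<in> {1..k} \<times> {1..n}"
  shows "card {T \<in> SYT (replicate k n). T (i, j) < T (i', j')}
    = card {T \<in> SYT (replicate k n). T (k + 1 - i', n + 1 - j') < T (k + 1 - i, n + 1 - j)}"
proof -
  let ?S = "SYT (replicate k n)"
  have "bij_betw (rotate_tableau k n) ?S ?S"
    by (rule bij_betw_byWitness[where f' = "rotate_tableau k n"])
      (auto simp: rotate_tableau_SYT rotate_tableau_rotate_tableau)
  then have "card {T \<in> ?S. rotate_tableau k n T (i, j) < rotate_tableau k n T (i', j')}
      = card {T \<in> ?S. T (i, j) < T (i', j')}"
    by (rule card_filter_bij_betw)
  moreover have "rotate_tableau k n T (i, j) < rotate_tableau k n T (i', j')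
      \<longleftrightarrow> T (k + 1 - i', n + 1 - j') < T (k + 1 - i, n + 1 - j)" if "T \<in> ?S" for T
    using rotate_tableau_inside[OF assms(1), where T = T] rotate_tableau_inside[OF assms(2), where T = T]
      SYT_le_size[OF that, of "(k + 1 - i, n + 1 - j)"] SYT_le_size[OF that, of "(k + 1 - i', n + 1 - j')"]
    unfolding sum_list_replicate by simp linarith
  then have "{T \<in> ?S. rotate_tableau k n T (i, j) < rotate_tableau k n T (i', j')}
      = {T \<in> ?S. T (k + 1 - i', n + 1 - j') < T (k + 1 - i, n + 1 - j)}"
    by blast
  ultimately show ?thesis by simp
qed

section \<open>The shape (n, n, n)\<close>

lemma card_SYT_three_equal_rows_cells_less:
  assumes "3 \<le> n"
  shows "card {T \<in> SYT [n, n, n]. T (3, n - 2) < T (2, n - 1)}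
    = 2 * card (SYT [n, n - 2, n - 2]) + 3 * card (SYT [n - 1, n - 2, n - 2])"
proof -
  obtain m where n: "n = m + 3" using assms by (metis add.commute le_Suc_ex)
  define h where "h lam = card {T \<in> SYT lam. T (3, m + 1) < T (2, m + 2)}" for lam
  \<comment> \<open>Delete the largest entry until it sits in cell (2, m + 2), where the comparison holds for
    every tableau, or in cell (3, m + 1), where it holds for none.\<close>
  note rec = card_SYT_three_rows_filter_rec
  note filter = SYT_filter_less_above_size SYT_filter_greater_above_size
  have "h [m + 3, m + 3, m + 3] = h [m + 3, m + 3, m + 2]"
    unfolding h_def by (subst rec) (auto simp: filter)
  also have "\<dots> = h [m + 3, m + 2, m + 2] + h [m + 3, m + 3, m + 1]"
    unfolding h_def by (subst rec) (auto simp: filter)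
  also have "h [m + 3, m + 3, m + 1] = h [m + 3, m + 2, m + 1]"
    unfolding h_def by (subst rec) (auto simp: filter)
  also have "h [m + 3, m + 2, m + 2] = h [m + 2, m + 2, m + 2] + h [m + 3, m + 2, m + 1]"
    unfolding h_def by (subst rec) (auto simp: filter)
  also have "h [m + 2, m + 2, m + 2] = h [m + 2, m + 2, m + 1]"
    unfolding h_def by (subst rec) (auto simp: filter)
  also have "h [m + 3, m + 2, m + 1] = h [m + 2, m + 2, m + 1] + card (SYT [m + 3, m + 1, m + 1])"
    unfolding h_def by (subst rec) (auto simp: filter)
  also have "h [m + 2, m + 2, m + 1] = card (SYT [m + 2, m + 1, m + 1])"
    unfolding h_def by (subst rec) (auto simp: filter)
  finally show ?thesis unfolding h_def n by simp
qed

lemma card_SYT_three_equal_rows_ratio: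
  assumes "3 \<le> n"
  shows "3 * (3 * real n - 1) * (3 * real n - 4)
      * (2 * real (card (SYT [n, n - 2, n - 2])) + 3 * real (card (SYT [n - 1, n - 2, n - 2])))
    = 5 * real n * (real n + 1) * real (card (SYT [n, n, n]))"
proof -
  obtain m where "n = m + 3" using assms by (metis add.commute le_Suc_ex)
  then have shapes: "[n, n - 2, n - 2] = [m + 1 + 2, m + 1, m + 1]" "[n - 1, n - 2, n - 2] = [m + 1 + 1, m + 1, m + 1]"
      "[n, n, n] = [m + 3 + 0, m + 3, m + 3]" and "real n = real m + 3"
    by simp_all
  then show ?thesis unfolding shapes card_SYT_two_equal_rows
    by (simp add: numeral_eq_Suc divide_simps) (simp add: algebra_simps)
qed

lemma sorting_ratio_from_counts:
  fixes x E Z :: real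
  assumes key: "3 * (3 * x - 1) * (3 * x - 4) * E = 5 * x * (x + 1) * Z" and "0 < Z" "3 \<le> x"
  shows "(2 * E - Z) / Z = - ((17 * x - 4) * (x - 3)) / (3 * (3 * x - 1) * (3 * x - 4))"
proof -
  define D where "D = 3 * (3 * x - 1) * (3 * x - 4)"
  have "D \<noteq> 0" using assms(3) unfolding D_def by simp
  have "(2 * E - Z) / Z = D * (2 * E - Z) / (D * Z)"
    using \<open>D \<noteq> 0\<close> by simp
  also have "\<dots> = (10 * x * (x + 1) - D) * Z / (D * Z)"
    using key unfolding D_def by (simp add: algebra_simps)
  also have "\<dots> = (10 * x * (x + 1) - D) / D"
    using \<open>0 < Z\<close> by simp
  also have "10 * x * (x + 1) - D = - ((17 * x - 4) * (x - 3))"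
    unfolding D_def by (simp add: algebra_simps)
  finally show ?thesis unfolding D_def .
qed

theorem mainTheorem10:
  fixes n :: nat
  assumes "n \<ge> 3"
  shows "sorting_prob [n, n, n] (1, 3) (2, 2) =
    - ((17 * real n - 4) * (real n - 3)) / (3 * (3 * real n - 1) * (3 * real n - 4))"
proof -
  let ?lam = "[n, n, n]"
  define E where "E = card {T \<in> SYT ?lam. T (2, 2) < T (1, 3)}"
  define Z where "Z = card (SYT ?lam)"
  have "replicate 3 n = ?lam" by (simp add: numeral_3_eq_3)
  then have "E = card {T \<in> SYT ?lam. T (3, n - 2) < T (2, n - 1)}"
    using card_SYT_rectangle_less_rotate[of 2 2 3 n 1 3] assms unfolding E_def by simp
  then have "3 * (3 * real n - 1) * (3 * real n - 4) * real E = 5 * real n * (real n + 1) * real Z"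
    using card_SYT_three_equal_rows_ratio[OF assms] card_SYT_three_equal_rows_cells_less[OF assms]
    unfolding Z_def by simp
  moreover have "0 < real Z"
    using card_SYT_two_equal_rows[of n 0] unfolding Z_def by simp
  moreover have "sorting_prob ?lam (1, 3) (2, 2) = (2 * real E - real Z) / real Z"
    unfolding E_def Z_def using assms
    by (intro sorting_prob_eq_card_less) (auto simp: mem_young_diagram_three_rows)
  ultimately show ?thesis using assms by (simp add: sorting_ratio_from_counts)
qed

end
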